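(* Let $\mathcal{S}$ be an inverse semigroupoid, $X$ a partially ordered set and $\theta$ an ordered partial action of $\mathcal{S}$ on $X$, and let $(\eta,E,i)$ be given by the globalization construction. Then the relation on $E$ defined by $[s,x]\leqslant[t,y]$ iff there exist $(r,y')\in D$ and $x'\in X$ with $(r,y')\approx(t,y)$, $x'\leqslant y'$ and $(r,x')\approx(s,x)$, is a well-defined partial order on $E$. Moreover, with this order each $E_s$ is an order ideal of $E$ and each $\eta_s$ is order preserving, so that $\eta$ is an ordered global action of $\mathcal{S}$ on $E$.
   Context: Inverse semigroupoid: arrows $\mathcal{S}$, objects $\mathcal{S}^{(0)}$, maps $d,c$, associative multiplication on $\mathcal{S}^{(2)}=\{(s,t):d(s)=c(t)\}$ with $d(st)=d(t)$, $c(st)=c(s)$, and unique $s^*$ with $ss^*s=s$, $s^*ss^*=s^*$; $E(\mathcal{S})$ = idempotents; natural partial order $s\leqslant t$ (for parallel $s,t$) iff $s=te$ for an idempotent $e$ with $(t,e)\in\mathcal{S}^{(2)}$. A partial action of $\mathcal{S}$ on a set $X$ is a pair $(\{X_s\},\{\theta_s\})$ of subsets $X_s\subseteq X$ and maps $\theta_s:X_{s^*}\to X_s$ such that: each $\theta_s$ is a bijection with $\theta_s^{-1}=\theta_{s^*}$ and $X=\bigcup_s X_s$; $\theta_s\circ\theta_t\subseteq\theta_{st}$ as partial maps for $(s,t)\in\mathcal{S}^{(2)}$; $X_s\subseteq X_t$ whenever $s\leqslant t$. It is global if $\theta_s\circ\theta_t=\theta_{st}$ for all $(s,t)\in\mathcal{S}^{(2)}$.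 When $X$ is a poset, it is an ordered partial action if each $X_s$ is an order ideal of $X$ and each $\theta_s$ is an order isomorphism. Globalization construction: let $D=\{(s,x)\in\mathcal{S}\times X: x\in X_{s^*s}\}$. Define $(s,x)\sim(t,y)$ on $D$ iff either (R1) $(t^*,s)\in\mathcal{S}^{(2)}$, $x\in X_{s^*t}$ and $\theta_{t^*s}(x)=y$; or (R2) $s,t\in E(\mathcal{S})$ and $x=y$. Let $\approx$ be the equivalence relation on $D$ generated by $\sim$, $E=D/{\approx}$, and $[s,x]$ the class of $(s,x)$. For $s\in\mathcal{S}$ put $D_s=\{(p,x)\in D:(s^*,p)\in\mathcal{S}^{(2)},\ x\in X_{p^*ss^*p}\}$, $E_s=\{[p,x]:(p,x)\in D_s\}$, and $\eta_s:E_{s^*}\to E_s$, $\eta_s([p,x])=[sp,x]$ for $(p,x)\in D_{s^*}$. Define $i:X\to E$ by $i(x)=[e,x]$ for any $e\in E(\mathcal{S})$ with $x\in X_e$. (These are well defined, $\eta=(\{E_s\},\{\eta_s\})$ is a global action of $\mathcal{S}$ on $E$, and $i$ is injective and equivariant.) *)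

theory Defs
  imports Main
begin

text \<open>A semigroupoid is given by a carrier set of arrows, domain and codomain maps
into a type of objects, and a multiplication which is only meaningful on
composable pairs (its values elsewhere are irrelevant).\<close>

record ('a, 'o) semigroupoid =
  arr  :: "'a set"
  dom  :: "'a \<Rightarrow> 'o"
  cod  :: "'a \<Rightarrow> 'o"
  mult :: "'a \<Rightarrow> 'a \<Rightarrow> 'a"

definition comp :: "('a, 'o, 'z) semigroupoid_scheme \<Rightarrow> 'a \<Rightarrow> 'a \<Rightarrow> bool" where
  "comp S s t \<longleftrightarrow> s \<in> arr S \<and> t \<in> arr S \<and> dom S s = cod S t"

definition is_semigroupoid :: "('a, 'o, 'z) semigroupoid_scheme \<Rightarrow> bool" where
  "is_semigroupoid S \<longleftrightarrow>
     (\<forall>s t. comp S s t \<longrightarrow> mult S s t \<in> arr S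
            \<and> dom S (mult S s t) = dom S t \<and> cod S (mult S s t) = cod S s)
   \<and> (\<forall>s t u. comp S s t \<and> comp S t u \<longrightarrow>
            mult S (mult S s t) u = mult S s (mult S t u))"

definition is_inv :: "('a, 'o, 'z) semigroupoid_scheme \<Rightarrow> 'a \<Rightarrow> 'a \<Rightarrow> bool" where
  "is_inv S s t \<longleftrightarrow> t \<in> arr S \<and> comp S s t \<and> comp S t s
     \<and> mult S (mult S s t) s = s \<and> mult S (mult S t s) t = t"

definition inverse_semigroupoid :: "('a, 'o, 'z) semigroupoid_scheme \<Rightarrow> bool" where
  "inverse_semigroupoid S \<longleftrightarrow> is_semigroupoid S \<and> (\<forall>s\<in>arr S. \<exists>!t. is_inv S s t)"

definition star :: "('a, 'o, 'z) semigroupoid_scheme \<Rightarrow> 'a \<Rightarrow> 'a" where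
  "star S s = (THE t. is_inv S s t)"

definition idem :: "('a, 'o, 'z) semigroupoid_scheme \<Rightarrow> 'a \<Rightarrow> bool" where
  "idem S e \<longleftrightarrow> e \<in> arr S \<and> comp S e e \<and> mult S e e = e"

definition nat_le :: "('a, 'o, 'z) semigroupoid_scheme \<Rightarrow> 'a \<Rightarrow> 'a \<Rightarrow> bool" where
  "nat_le S s t \<longleftrightarrow> s \<in> arr S \<and> t \<in> arr S \<and> dom S s = dom S t \<and> cod S s = cod S t
     \<and> (\<exists>e. idem S e \<and> comp S t e \<and> s = mult S t e)"

definition poset :: "'x set \<Rightarrow> ('x \<Rightarrow> 'x \<Rightarrow> bool) \<Rightarrow> bool" where
  "poset X le \<longleftrightarrow> (\<forall>x\<in>X. le x x)
     \<and> (\<forall>x\<in>X. \<forall>y\<in>X. le x y \<and> le y x \<longrightarrow> x = y)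
     \<and> (\<forall>x\<in>X. \<forall>y\<in>X. \<forall>z\<in>X. le x y \<and> le y z \<longrightarrow> le x z)"

definition order_ideal :: "'x set \<Rightarrow> ('x \<Rightarrow> 'x \<Rightarrow> bool) \<Rightarrow> 'x set \<Rightarrow> bool" where
  "order_ideal X le I \<longleftrightarrow> I \<subseteq> X \<and> (\<forall>x\<in>I. \<forall>y\<in>X. le y x \<longrightarrow> y \<in> I)"

definition order_iso :: "('x \<Rightarrow> 'x \<Rightarrow> bool) \<Rightarrow> ('x \<Rightarrow> 'x) \<Rightarrow> 'x set \<Rightarrow> 'x set \<Rightarrow> bool" where
  "order_iso le f A B \<longleftrightarrow> bij_betw f A B \<and> (\<forall>x\<in>A. \<forall>y\<in>A. le x y \<longleftrightarrow> le (f x) (f y))"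

definition partial_action ::
  "('a, 'o, 'z) semigroupoid_scheme \<Rightarrow> 'x set \<Rightarrow> ('a \<Rightarrow> 'x set) \<Rightarrow> ('a \<Rightarrow> 'x \<Rightarrow> 'x) \<Rightarrow> bool" where
  "partial_action S X Xs \<theta> \<longleftrightarrow>
     (\<forall>s\<in>arr S. Xs s \<subseteq> X)
   \<and> X = (\<Union>s\<in>arr S. Xs s)
   \<and> (\<forall>s\<in>arr S. bij_betw (\<theta> s) (Xs (star S s)) (Xs s)
        \<and> (\<forall>x\<in>Xs (star S s). \<theta> (star S s) (\<theta> s x) = x)
        \<and> (\<forall>y\<in>Xs s. \<theta> s (\<theta> (star S s) y) = y))
   \<and> (\<forall>s t x. comp S s t \<and> x \<in> Xs (star S t) \<and> \<theta> t x \<in> Xs (star S s) \<longrightarrow>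
        x \<in> Xs (star S (mult S s t)) \<and> \<theta> (mult S s t) x = \<theta> s (\<theta> t x))
   \<and> (\<forall>s t. nat_le S s t \<longrightarrow> Xs s \<subseteq> Xs t)"

definition global_action ::
  "('a, 'o, 'z) semigroupoid_scheme \<Rightarrow> 'x set \<Rightarrow> ('a \<Rightarrow> 'x set) \<Rightarrow> ('a \<Rightarrow> 'x \<Rightarrow> 'x) \<Rightarrow> bool" where
  "global_action S X Xs \<theta> \<longleftrightarrow> partial_action S X Xs \<theta>
   \<and> (\<forall>s t. comp S s t \<longrightarrow>
        {x \<in> Xs (star S t). \<theta> t x \<in> Xs (star S s)} = Xs (star S (mult S s t))
        \<and> (\<forall>x\<in>Xs (star S (mult S s t)). \<theta> (mult S s t) x = \<theta> s (\<theta> t x)))"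

definition ordered_action ::
  "('a, 'o, 'z) semigroupoid_scheme \<Rightarrow> 'x set \<Rightarrow> ('x \<Rightarrow> 'x \<Rightarrow> bool)
     \<Rightarrow> ('a \<Rightarrow> 'x set) \<Rightarrow> ('a \<Rightarrow> 'x \<Rightarrow> 'x) \<Rightarrow> bool" where
  "ordered_action S X le Xs \<theta> \<longleftrightarrow>
     (\<forall>s\<in>arr S. order_ideal X le (Xs s) \<and> order_iso le (\<theta> s) (Xs (star S s)) (Xs s))"

definition ordered_partial_action where
  "ordered_partial_action S X le Xs \<theta> \<longleftrightarrow>
     poset X le \<and> partial_action S X Xs \<theta> \<and> ordered_action S X le Xs \<theta>"

definition ordered_global_action where
  "ordered_global_action S X le Xs \<theta> \<longleftrightarrow>
     poset X le \<and> global_action S X Xs \<theta> \<and> ordered_action S X le Xs \<theta>"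

definition glob_D :: "('a, 'o, 'z) semigroupoid_scheme \<Rightarrow> ('a \<Rightarrow> 'x set) \<Rightarrow> ('a \<times> 'x) set" where
  "glob_D S Xs = {(s, x). s \<in> arr S \<and> x \<in> Xs (mult S (star S s) s)}"

definition glob_sim ::
  "('a, 'o, 'z) semigroupoid_scheme \<Rightarrow> ('a \<Rightarrow> 'x set) \<Rightarrow> ('a \<Rightarrow> 'x \<Rightarrow> 'x) \<Rightarrow> ('a \<times> 'x) rel" where
  "glob_sim S Xs \<theta> = {((s, x), (t, y)). (s, x) \<in> glob_D S Xs \<and> (t, y) \<in> glob_D S Xs \<and>
     ((comp S (star S t) s \<and> x \<in> Xs (mult S (star S s) t) \<and> \<theta> (mult S (star S t) s) x = y)
      \<or> (idem S s \<and> idem S t \<and> x = y))}"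

definition glob_approx ::
  "('a, 'o, 'z) semigroupoid_scheme \<Rightarrow> ('a \<Rightarrow> 'x set) \<Rightarrow> ('a \<Rightarrow> 'x \<Rightarrow> 'x) \<Rightarrow> ('a \<times> 'x) rel" where
  "glob_approx S Xs \<theta> =
     (glob_sim S Xs \<theta> \<union> (glob_sim S Xs \<theta>)\<inverse>)\<^sup>* \<inter> (glob_D S Xs \<times> glob_D S Xs)"

definition glob_E ::
  "('a, 'o, 'z) semigroupoid_scheme \<Rightarrow> ('a \<Rightarrow> 'x set) \<Rightarrow> ('a \<Rightarrow> 'x \<Rightarrow> 'x) \<Rightarrow> ('a \<times> 'x) set set" where
  "glob_E S Xs \<theta> = glob_D S Xs // glob_approx S Xs \<theta>"

definition glob_cls ::
  "('a, 'o, 'z) semigroupoid_scheme \<Rightarrow> ('a \<Rightarrow> 'x set) \<Rightarrow> ('a \<Rightarrow> 'x \<Rightarrow> 'x) \<Rightarrow> 'a \<Rightarrow> 'x \<Rightarrow> ('a \<times> 'x) set" where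
  "glob_cls S Xs \<theta> s x = glob_approx S Xs \<theta> `` {(s, x)}"

definition glob_Ds :: "('a, 'o, 'z) semigroupoid_scheme \<Rightarrow> ('a \<Rightarrow> 'x set) \<Rightarrow> 'a \<Rightarrow> ('a \<times> 'x) set" where
  "glob_Ds S Xs s = {(p, x). (p, x) \<in> glob_D S Xs \<and> comp S (star S s) p \<and>
      x \<in> Xs (mult S (star S p) (mult S (mult S s (star S s)) p))}"

definition glob_Es ::
  "('a, 'o, 'z) semigroupoid_scheme \<Rightarrow> ('a \<Rightarrow> 'x set) \<Rightarrow> ('a \<Rightarrow> 'x \<Rightarrow> 'x) \<Rightarrow> 'a \<Rightarrow> ('a \<times> 'x) set set" where
  "glob_Es S Xs \<theta> s = (\<lambda>(p, x). glob_cls S Xs \<theta> p x) ` glob_Ds S Xs s"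

definition glob_eta ::
  "('a, 'o, 'z) semigroupoid_scheme \<Rightarrow> ('a \<Rightarrow> 'x set) \<Rightarrow> ('a \<Rightarrow> 'x \<Rightarrow> 'x) \<Rightarrow> 'a
     \<Rightarrow> ('a \<times> 'x) set \<Rightarrow> ('a \<times> 'x) set" where
  "glob_eta S Xs \<theta> s C =
     (let (p, x) = (SOME (p, x). (p, x) \<in> glob_Ds S Xs (star S s) \<and> C = glob_cls S Xs \<theta> p x)
      in glob_cls S Xs \<theta> (mult S s p) x)"

definition glob_le_rep ::
  "('a, 'o, 'z) semigroupoid_scheme \<Rightarrow> 'x set \<Rightarrow> ('x \<Rightarrow> 'x \<Rightarrow> bool) \<Rightarrow> ('a \<Rightarrow> 'x set)
     \<Rightarrow> ('a \<Rightarrow> 'x \<Rightarrow> 'x) \<Rightarrow> 'a \<Rightarrow> 'x \<Rightarrow> 'a \<Rightarrow> 'x \<Rightarrow> bool" where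
  "glob_le_rep S X le Xs \<theta> s x t y \<longleftrightarrow>
     (\<exists>r y' x'. (r, y') \<in> glob_D S Xs \<and> x' \<in> X \<and>
        ((r, y'), (t, y)) \<in> glob_approx S Xs \<theta> \<and> le x' y' \<and>
        ((r, x'), (s, x)) \<in> glob_approx S Xs \<theta>)"

definition glob_le ::
  "('a, 'o, 'z) semigroupoid_scheme \<Rightarrow> 'x set \<Rightarrow> ('x \<Rightarrow> 'x \<Rightarrow> bool) \<Rightarrow> ('a \<Rightarrow> 'x set)
     \<Rightarrow> ('a \<Rightarrow> 'x \<Rightarrow> 'x) \<Rightarrow> ('a \<times> 'x) set \<Rightarrow> ('a \<times> 'x) set \<Rightarrow> bool" where
  "glob_le S X le Xs \<theta> C1 C2 \<longleftrightarrow>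
     (\<exists>s x t y. (s, x) \<in> glob_D S Xs \<and> (t, y) \<in> glob_D S Xs \<and>
        C1 = glob_cls S Xs \<theta> s x \<and> C2 = glob_cls S Xs \<theta> t y \<and>
        glob_le_rep S X le Xs \<theta> s x t y)"

end

theory Submission
  imports Defs
begin

text \<open>The generated equivalence \<open>\<approx>\<close> has an explicit description: \<open>(s, x) \<approx> (t, y)\<close>
  iff either \<open>\<theta>\<^sub>s x = \<theta>\<^sub>t y\<close> with both sides defined, or \<open>c(s) = c(t)\<close>, \<open>x \<in> X\<^bsub>s\<^sup>*t\<^esub>\<close> and
  \<open>\<theta>\<^bsub>t\<^sup>*s\<^esub> x = y\<close>. In particular the second coordinate of a representative is determined by
  its arrow. Since the \<open>\<theta>\<^sub>s\<close> are order isomorphisms between order ideals, anything below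
  one representative can be transported below any other one, so
  \<open>[s, x] \<le> [t, y]\<close> iff \<open>(t, x') \<approx> (s, x)\<close> for some \<open>x' \<le> y\<close>; reflexivity, antisymmetry and
  transitivity are then inherited from \<open>X\<close>. The maps \<open>\<eta>\<^sub>s\<close> act on representatives by
  left multiplication of the arrow, leaving the point unchanged, and membership in \<open>E\<^sub>s\<close> is
  membership of the point in the order ideal \<open>X\<^bsub>p\<^sup>*ss\<^sup>*p\<^esub>\<close>; this gives the ideal property of
  \<open>E\<^sub>s\<close> and monotonicity of \<open>\<eta>\<^sub>s\<close>.\<close>

section \<open>Inverse semigroupoids\<close>

locale inv_semigroupoid =
  fixes S :: "('a, 'o, 'z) semigroupoid_scheme"
  assumes inverse: "inverse_semigroupoid S"
begin

abbreviation mult_S :: "'a \<Rightarrow> 'a \<Rightarrow> 'a" (infixr "\<cdot>" 70) where "s \<cdot> t \<equiv> mult S s t"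
abbreviation iv :: "'a \<Rightarrow> 'a" where "iv s \<equiv> star S s"
abbreviation A where "A \<equiv> arr S"
abbreviation dm where "dm \<equiv> dom S"
abbreviation cd where "cd \<equiv> cod S"

lemma semigroupoid: "is_semigroupoid S"
  using inverse unfolding inverse_semigroupoid_def by auto

lemma mult_arr [simp]: "s \<in> A \<Longrightarrow> t \<in> A \<Longrightarrow> dm s = cd t \<Longrightarrow> s \<cdot> t \<in> A"
  and dom_mult [simp]: "s \<in> A \<Longrightarrow> t \<in> A \<Longrightarrow> dm s = cd t \<Longrightarrow> dm (s \<cdot> t) = dm t"
  and cod_mult [simp]: "s \<in> A \<Longrightarrow> t \<in> A \<Longrightarrow> dm s = cd t \<Longrightarrow> cd (s \<cdot> t) = cd s"
  using semigroupoid unfolding is_semigroupoid_def comp_def by blast+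

lemma mult_assoc [simp]:
  "s \<in> A \<Longrightarrow> t \<in> A \<Longrightarrow> u \<in> A \<Longrightarrow> dm s = cd t \<Longrightarrow> dm t = cd u \<Longrightarrow> (s \<cdot> t) \<cdot> u = s \<cdot> (t \<cdot> u)"
  using semigroupoid unfolding is_semigroupoid_def comp_def by blast

lemma is_inv_star: "s \<in> A \<Longrightarrow> is_inv S s (iv s)"
  using inverse unfolding inverse_semigroupoid_def star_def by (metis theI')

lemma star_unique: "s \<in> A \<Longrightarrow> is_inv S s t \<Longrightarrow> iv s = t"
  using inverse is_inv_star unfolding inverse_semigroupoid_def by blast

lemma star_arr [simp]: "s \<in> A \<Longrightarrow> iv s \<in> A"
  and dom_star [simp]: "s \<in> A \<Longrightarrow> dm (iv s) = cd s"
  and cod_star [simp]: "s \<in> A \<Longrightarrow> cd (iv s) = dm s"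
  using is_inv_star[of s] unfolding is_inv_def comp_def by simp_all

lemma mult_star_mult [simp]: "s \<in> A \<Longrightarrow> s \<cdot> iv s \<cdot> s = s"
  and star_mult_star [simp]: "s \<in> A \<Longrightarrow> iv s \<cdot> s \<cdot> iv s = iv s"
  using is_inv_star[of s] mult_assoc[of s "iv s" s] mult_assoc[of "iv s" s "iv s"]
  unfolding is_inv_def comp_def by simp_all

lemma mult_star_mult_left [simp]: "s \<in> A \<Longrightarrow> u \<in> A \<Longrightarrow> dm s = cd u \<Longrightarrow> s \<cdot> iv s \<cdot> s \<cdot> u = s \<cdot> u"
  using mult_assoc[of "s \<cdot> iv s" s u] by simp

lemma star_mult_star_left [simp]: "s \<in> A \<Longrightarrow> u \<in> A \<Longrightarrow> cd s = cd u \<Longrightarrow> iv s \<cdot> s \<cdot> iv s \<cdot> u = iv s \<cdot> u"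
  using mult_assoc[of "iv s \<cdot> s" "iv s" u] by simp

lemma star_star [simp]: "s \<in> A \<Longrightarrow> iv (iv s) = s"
  by (rule star_unique) (simp_all add: is_inv_def comp_def)

lemma idem_iff: "idem S e \<longleftrightarrow> e \<in> A \<and> dm e = cd e \<and> e \<cdot> e = e"
  unfolding idem_def comp_def by auto

lemma star_idem: "idem S e \<Longrightarrow> iv e = e"
  by (rule star_unique) (auto simp: idem_iff is_inv_def comp_def)

lemma idem_mult_left: "idem S e \<Longrightarrow> u \<in> A \<Longrightarrow> dm e = cd u \<Longrightarrow> e \<cdot> e \<cdot> u = e \<cdot> u"
  unfolding idem_iff by (metis mult_assoc)

lemma idem_mult_star [simp]: "s \<in> A \<Longrightarrow> idem S (s \<cdot> iv s)"
  and idem_star_mult [simp]: "s \<in> A \<Longrightarrow> idem S (iv s \<cdot> s)"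
  unfolding idem_iff by simp_all

text \<open>The classical argument: \<open>x = (e f)\<^sup>*\<close> satisfies \<open>x = f x e\<close>, which makes \<open>x\<close>
  idempotent, so \<open>e f = x\<^sup>* = x\<close>.\<close>

lemma idem_mult_idem:
  assumes e: "idem S e" and f: "idem S f" and d: "dm e = dm f"
  shows "idem S (e \<cdot> f)"
proof -
  have eA: "e \<in> A" and fA: "f \<in> A" and de: "dm e = cd e" and df: "dm f = cd f"
    and ee: "e \<cdot> e = e" and ff: "f \<cdot> f = f" using e f by (auto simp: idem_iff)
  have eet: "\<And>u. u \<in> A \<Longrightarrow> cd u = dm e \<Longrightarrow> e \<cdot> e \<cdot> u = e \<cdot> u" using idem_mult_left e by auto
  have fft: "\<And>u. u \<in> A \<Longrightarrow> cd u = dm e \<Longrightarrow> f \<cdot> f \<cdot> u = f \<cdot> u" using idem_mult_left f d by auto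
  define x where "x = iv (e \<cdot> f)"
  have efA: "e \<cdot> f \<in> A" using eA fA de df d by simp
  have xA: "x \<in> A" and dx: "dm x = dm e" and cx: "cd x = dm e"
    using efA eA fA de df d by (auto simp: x_def)
  have i1: "e \<cdot> f \<cdot> x \<cdot> e \<cdot> f = e \<cdot> f"
    using mult_star_mult[OF efA] eA fA xA de df d dx cx by (simp add: x_def del: mult_star_mult)
  have i2: "x \<cdot> e \<cdot> f \<cdot> x = x"
    using star_mult_star[OF efA] eA fA xA de df d dx cx by (simp add: x_def del: star_mult_star)
  have i2e: "x \<cdot> e \<cdot> f \<cdot> x \<cdot> e = x \<cdot> e"
    using i2 eA fA xA de df d dx cx by (metis mult_assoc mult_arr dom_mult cod_mult)
  have "is_inv S (e \<cdot> f) (f \<cdot> x \<cdot> e)"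
    unfolding is_inv_def comp_def
    using eA fA xA de df d dx cx i1 i2e eet fft ee ff by simp
  hence fxe: "x = f \<cdot> x \<cdot> e" using star_unique efA x_def by blast
  have "x \<cdot> x = f \<cdot> (x \<cdot> e \<cdot> f \<cdot> x \<cdot> e)"
    by (subst fxe, subst fxe) (use eA fA xA de df d dx cx in simp)
  also have "\<dots> = x" using i2e fxe by simp
  finally have "idem S x" using xA dx cx by (simp add: idem_iff)
  moreover have "e \<cdot> f = iv x" using efA by (simp add: x_def)
  ultimately show ?thesis using star_idem by simp
qed

lemma idem_commute:
  assumes e: "idem S e" and f: "idem S f" and d: "dm e = dm f"
  shows "e \<cdot> f = f \<cdot> e"
proof -
  have eA: "e \<in> A" and fA: "f \<in> A" and de: "dm e = cd e" and df: "dm f = cd f"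
    and ee: "e \<cdot> e = e" and ff: "f \<cdot> f = f" using e f by (auto simp: idem_iff)
  have ef: "idem S (e \<cdot> f)" and fe: "idem S (f \<cdot> e)"
    using idem_mult_idem e f d by auto
  have "e \<cdot> f \<cdot> e \<cdot> f = e \<cdot> f" "f \<cdot> e \<cdot> f \<cdot> e = f \<cdot> e"
    using ef fe eA fA de df d unfolding idem_iff by simp_all
  moreover have "e \<cdot> e \<cdot> u = e \<cdot> u" "f \<cdot> f \<cdot> u = f \<cdot> u" if "u \<in> A" "cd u = dm e" for u
    using idem_mult_left e f d that by auto
  ultimately have "is_inv S (e \<cdot> f) (f \<cdot> e)"
    unfolding is_inv_def comp_def using eA fA de df d ee ff by simp
  hence "iv (e \<cdot> f) = f \<cdot> e" using star_unique eA fA de df d by simp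
  thus ?thesis using star_idem[OF ef] by simp
qed

lemma idem_commute_left:
  assumes e: "idem S e" and f: "idem S f" and d: "dm e = dm f" and u: "u \<in> A" "cd u = dm e"
  shows "e \<cdot> f \<cdot> u = f \<cdot> e \<cdot> u"
proof -
  have "e \<cdot> f \<cdot> u = (e \<cdot> f) \<cdot> u" using e f d u by (simp add: idem_iff)
  also have "\<dots> = (f \<cdot> e) \<cdot> u" using idem_commute[OF e f d] by simp
  also have "\<dots> = f \<cdot> e \<cdot> u" using e f d u by (simp add: idem_iff)
  finally show ?thesis .
qed

lemma star_mult [simp]:
  assumes s: "s \<in> A" and t: "t \<in> A" and d: "dm s = cd t"
  shows "iv (s \<cdot> t) = iv t \<cdot> iv s"
proof -
  have c: "iv s \<cdot> s \<cdot> t \<cdot> iv t = t \<cdot> iv t \<cdot> iv s \<cdot> s"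
    using idem_commute[of "iv s \<cdot> s" "t \<cdot> iv t"] s t d by simp
  have "s \<cdot> t \<cdot> iv t \<cdot> iv s \<cdot> s \<cdot> t = s \<cdot> (t \<cdot> iv t \<cdot> iv s \<cdot> s) \<cdot> t"
    using s t d by simp
  also have "\<dots> = s \<cdot> (iv s \<cdot> s \<cdot> t \<cdot> iv t) \<cdot> t" using c by simp
  also have "\<dots> = s \<cdot> t" using s t d by simp
  finally have e1: "s \<cdot> t \<cdot> iv t \<cdot> iv s \<cdot> s \<cdot> t = s \<cdot> t" .
  have "iv t \<cdot> iv s \<cdot> s \<cdot> t \<cdot> iv t \<cdot> iv s = iv t \<cdot> (iv s \<cdot> s \<cdot> t \<cdot> iv t) \<cdot> iv s"
    using s t d by simp
  also have "\<dots> = iv t \<cdot> (t \<cdot> iv t \<cdot> iv s \<cdot> s) \<cdot> iv s" using c by simp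
  also have "\<dots> = iv t \<cdot> iv s" using s t d by simp
  finally have e2: "iv t \<cdot> iv s \<cdot> s \<cdot> t \<cdot> iv t \<cdot> iv s = iv t \<cdot> iv s" .
  have "is_inv S (s \<cdot> t) (iv t \<cdot> iv s)"
    unfolding is_inv_def comp_def using s t d e1 e2 by simp
  thus ?thesis using star_unique s t d by simp
qed

lemma idem_conjugate:
  assumes f: "idem S f" and p: "p \<in> A" and d: "dm f = cd p"
  shows "idem S (iv p \<cdot> f \<cdot> p)"
proof -
  have c: "f \<cdot> p \<cdot> iv p \<cdot> f \<cdot> p = p \<cdot> iv p \<cdot> f \<cdot> f \<cdot> p"
    using idem_commute_left[OF f idem_mult_star[OF p], of "f \<cdot> p"] f p d by (simp add: idem_iff)
  have "(iv p \<cdot> f \<cdot> p) \<cdot> (iv p \<cdot> f \<cdot> p) = iv p \<cdot> (f \<cdot> p \<cdot> iv p \<cdot> f \<cdot> p)"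
    using f p d by (simp add: idem_iff)
  also have "\<dots> = iv p \<cdot> f \<cdot> p" using c f p d idem_mult_left[OF f, of p] by (simp add: idem_iff)
  finally show ?thesis using f p d by (simp add: idem_iff)
qed

lemma nat_leD: "nat_le S a b \<Longrightarrow> a \<in> A \<and> b \<in> A \<and> dm a = dm b \<and> cd a = cd b"
  unfolding nat_le_def by auto

lemma nat_leE:
  assumes "nat_le S a b"
  obtains e where "idem S e" "e \<in> A" "dm b = cd e" "dm e = cd e" "e \<cdot> e = e" "a = b \<cdot> e"
    "a \<in> A" "b \<in> A" "dm a = dm b" "cd a = cd b"
  using assms unfolding nat_le_def comp_def idem_iff by auto

lemma nat_le_mult_idem: "idem S e \<Longrightarrow> s \<in> A \<Longrightarrow> dm s = cd e \<Longrightarrow> nat_le S (s \<cdot> e) s"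
  unfolding nat_le_def comp_def by (auto simp: idem_iff)

lemma nat_le_idem_mult:
  assumes e: "idem S e" and s: "s \<in> A" and d: "dm e = cd s"
  shows "nat_le S (e \<cdot> s) s"
proof -
  have "(s \<cdot> iv s) \<cdot> e \<cdot> s = e \<cdot> (s \<cdot> iv s) \<cdot> s"
    by (rule idem_commute_left) (use e s d in auto)
  hence "e \<cdot> s = s \<cdot> (iv s \<cdot> e \<cdot> s)" using e s d by (simp add: idem_iff)
  moreover have "nat_le S (s \<cdot> (iv s \<cdot> e \<cdot> s)) s"
    using nat_le_mult_idem[OF idem_conjugate[OF e s d] s] e s d by (simp add: idem_iff)
  ultimately show ?thesis by simp
qed

lemma nat_le_mult_left:
  assumes n: "nat_le S a b" and c: "c \<in> A" "dm c = cd b"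
  shows "nat_le S (c \<cdot> a) (c \<cdot> b)"
proof -
  obtain e where e: "idem S e" "e \<in> A" "dm b = cd e" "dm e = cd e" "e \<cdot> e = e" "a = b \<cdot> e"
    "a \<in> A" "b \<in> A" "dm a = dm b" "cd a = cd b" using nat_leE[OF n] by blast
  have "c \<cdot> a = (c \<cdot> b) \<cdot> e" using e c by simp
  moreover have "nat_le S ((c \<cdot> b) \<cdot> e) (c \<cdot> b)"
    by (rule nat_le_mult_idem) (use e c in simp_all)
  ultimately show ?thesis by simp
qed

lemma nat_le_mult_right:
  assumes n: "nat_le S a b" and p: "p \<in> A" "dm b = cd p"
  shows "nat_le S (a \<cdot> p) (b \<cdot> p)"
proof -
  obtain e where e: "idem S e" "e \<in> A" "dm b = cd e" "dm e = cd e" "e \<cdot> e = e" "a = b \<cdot> e"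
    "a \<in> A" "b \<in> A" "dm a = dm b" "cd a = cd b" using nat_leE[OF n] by blast
  have "(p \<cdot> iv p) \<cdot> e \<cdot> p = e \<cdot> (p \<cdot> iv p) \<cdot> p"
    by (rule idem_commute_left) (use e p in auto)
  hence "p \<cdot> iv p \<cdot> e \<cdot> p = e \<cdot> p" using e p by simp
  hence "a \<cdot> p = (b \<cdot> p) \<cdot> (iv p \<cdot> e \<cdot> p)" using e p by simp
  moreover have "nat_le S ((b \<cdot> p) \<cdot> (iv p \<cdot> e \<cdot> p)) (b \<cdot> p)"
    by (rule nat_le_mult_idem) (use e p idem_conjugate[OF e(1) p(1)] in simp_all)
  ultimately show ?thesis by simp
qed

lemma nat_le_star:
  assumes n: "nat_le S a b"
  shows "nat_le S (iv a) (iv b)"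
proof -
  obtain e where e: "idem S e" "e \<in> A" "dm b = cd e" "dm e = cd e" "e \<cdot> e = e" "a = b \<cdot> e"
    "a \<in> A" "b \<in> A" "dm a = dm b" "cd a = cd b" using nat_leE[OF n] by blast
  have "iv a = e \<cdot> iv b" using e star_idem[OF e(1)] by simp
  moreover have "nat_le S (e \<cdot> iv b) (iv b)" by (rule nat_le_idem_mult) (use e in simp_all)
  ultimately show ?thesis by simp
qed

lemma nat_le_eq:
  assumes n: "nat_le S a b"
  shows "a = b \<cdot> iv a \<cdot> a"
proof -
  obtain e where e: "idem S e" "e \<in> A" "dm b = cd e" "dm e = cd e" "e \<cdot> e = e" "a = b \<cdot> e"
    "a \<in> A" "b \<in> A" "dm a = dm b" "cd a = cd b" using nat_leE[OF n] by blast
  have "e \<cdot> (iv b \<cdot> b) \<cdot> e = (iv b \<cdot> b) \<cdot> e \<cdot> e"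
    by (rule idem_commute_left) (use e in auto)
  hence c: "e \<cdot> iv b \<cdot> b \<cdot> e = iv b \<cdot> b \<cdot> e" using e by simp
  have "b \<cdot> iv a \<cdot> a = b \<cdot> (e \<cdot> iv b \<cdot> b \<cdot> e)" using e star_idem[OF e(1)] by simp
  also have "\<dots> = b \<cdot> e" using c e by simp
  finally show ?thesis using e(6) by simp
qed

lemma nat_le_conjugate_idem:
  assumes e: "idem S e" and q: "q \<in> A" and d: "dm e = cd q"
  shows "nat_le S (iv q \<cdot> e \<cdot> q) (iv q \<cdot> q)"
proof -
  have "nat_le S ((iv q \<cdot> q) \<cdot> (iv q \<cdot> e \<cdot> q)) (iv q \<cdot> q)"
    by (rule nat_le_mult_idem) (use e q d idem_conjugate[OF e q d] in \<open>simp_all add: idem_iff\<close>)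
  thus ?thesis using e q d by (simp add: idem_iff)
qed

end

section \<open>Partial actions and the globalization\<close>

locale part_action = inv_semigroupoid S for S :: "('a, 'o, 'z) semigroupoid_scheme" +
  fixes X :: "'x set" and Xs :: "'a \<Rightarrow> 'x set" and th :: "'a \<Rightarrow> 'x \<Rightarrow> 'x"
  assumes partial: "partial_action S X Xs th"
begin

lemma Xs_subset: "s \<in> A \<Longrightarrow> Xs s \<subseteq> X"
  and th_bij: "s \<in> A \<Longrightarrow> bij_betw (th s) (Xs (iv s)) (Xs s)"
  and th_star_th: "s \<in> A \<Longrightarrow> x \<in> Xs (iv s) \<Longrightarrow> th (iv s) (th s x) = x"
  and th_th_star: "s \<in> A \<Longrightarrow> y \<in> Xs s \<Longrightarrow> th s (th (iv s) y) = y"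
  and Xs_mono: "nat_le S s t \<Longrightarrow> Xs s \<subseteq> Xs t"
  using partial unfolding partial_action_def by blast+

lemma th_in: "s \<in> A \<Longrightarrow> x \<in> Xs (iv s) \<Longrightarrow> th s x \<in> Xs s"
  using th_bij bij_betw_apply by metis

lemma th_mult:
  "s \<in> A \<Longrightarrow> t \<in> A \<Longrightarrow> dm s = cd t \<Longrightarrow> x \<in> Xs (iv t) \<Longrightarrow> th t x \<in> Xs (iv s) \<Longrightarrow>
    x \<in> Xs (iv (s \<cdot> t)) \<and> th (s \<cdot> t) x = th s (th t x)"
  using partial unfolding partial_action_def comp_def by blast

lemma th_idem:
  assumes e: "idem S e" and x: "x \<in> Xs e"
  shows "th e x = x"
proof -
  have eA: "e \<in> A" "dm e = cd e" "e \<cdot> e = e" using e unfolding idem_iff by auto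
  have x': "x \<in> Xs (iv e)" using x star_idem[OF e] by simp
  have "th e x \<in> Xs (iv e)" using th_in[OF eA(1) x'] star_idem[OF e] by simp
  hence "th e x = th e (th e x)" using th_mult[OF eA(1) eA(1) eA(2) x'] eA by simp
  also have "\<dots> = x" using th_star_th[OF eA(1) x'] star_idem[OF e] by simp
  finally show ?thesis .
qed

lemma Xs_star_subset:
  assumes s: "s \<in> A"
  shows "Xs (iv s) \<subseteq> Xs (iv s \<cdot> s)"
proof
  fix x assume x: "x \<in> Xs (iv s)"
  have "th s x \<in> Xs (iv (iv s))" using th_in[OF s x] s by simp
  hence "x \<in> Xs (iv (iv s \<cdot> s))" using th_mult[OF star_arr[OF s] s _ x] s by simp
  thus "x \<in> Xs (iv s \<cdot> s)" using s by simp
qed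

lemma Xs_subset_mult_star: "s \<in> A \<Longrightarrow> Xs s \<subseteq> Xs (s \<cdot> iv s)"
  using Xs_star_subset[of "iv s"] by simp

lemma th_nat_le:
  assumes n: "nat_le S a b" and x: "x \<in> Xs (iv a)"
  shows "x \<in> Xs (iv b) \<and> th a x = th b x"
proof -
  have ab: "a \<in> A" "b \<in> A" "dm a = dm b" "cd a = cd b" using nat_leD[OF n] by auto
  have xb: "x \<in> Xs (iv b)" using Xs_mono[OF nat_le_star[OF n]] x by blast
  have x1: "x \<in> Xs (iv a \<cdot> a)" using Xs_star_subset[OF ab(1)] x by blast
  have t1: "th (iv a \<cdot> a) x = x" using th_idem[OF idem_star_mult[OF ab(1)] x1] .
  have "th (b \<cdot> (iv a \<cdot> a)) x = th b (th (iv a \<cdot> a) x)"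
    using th_mult[OF ab(2) _ _ _] x1 t1 xb ab by simp
  moreover have "b \<cdot> (iv a \<cdot> a) = a" using nat_le_eq[OF n] ab by simp
  ultimately show ?thesis using t1 xb by simp
qed

abbreviation D where "D \<equiv> glob_D S Xs"

lemma D_iff: "(s, x) \<in> D \<longleftrightarrow> s \<in> A \<and> x \<in> Xs (iv s \<cdot> s)"
  by (simp add: glob_D_def)

lemma D_in_X: "(s, x) \<in> D \<Longrightarrow> x \<in> X"
  using D_iff Xs_subset[of "iv s \<cdot> s"] by auto

definition transl :: "'a \<Rightarrow> 'x \<Rightarrow> 'a \<Rightarrow> 'x \<Rightarrow> bool" where
  "transl s x t y \<longleftrightarrow> s \<in> A \<and> t \<in> A \<and> cd t = cd s \<and> x \<in> Xs (iv s \<cdot> t) \<and> th (iv t \<cdot> s) x = y"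

definition same_image :: "'a \<Rightarrow> 'x \<Rightarrow> 'a \<Rightarrow> 'x \<Rightarrow> bool" where
  "same_image s x t y \<longleftrightarrow> x \<in> Xs (iv s) \<and> y \<in> Xs (iv t) \<and> th s x = th t y"

text \<open>Rule (R1) alone is already an equivalence relation (\<open>transl\<close>); closing under (R2) only
  adds the identification of pairs with a common image (\<open>approx_iff_related\<close>).\<close>

definition related :: "'a \<Rightarrow> 'x \<Rightarrow> 'a \<Rightarrow> 'x \<Rightarrow> bool" where
  "related s x t y \<longleftrightarrow> (s, x) \<in> D \<and> (t, y) \<in> D \<and> (same_image s x t y \<or> transl s x t y)"

lemma transl_refl: "(s, x) \<in> D \<Longrightarrow> transl s x s x"
  unfolding transl_def D_iff using th_idem[OF idem_star_mult] by auto

lemma transl_sym: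
  assumes r: "transl s x t y"
  shows "transl t y s x"
proof -
  have st: "s \<in> A" "t \<in> A" "cd t = cd s" and x: "x \<in> Xs (iv s \<cdot> t)" and y: "th (iv t \<cdot> s) x = y"
    using r unfolding transl_def by auto
  have a: "iv t \<cdot> s \<in> A" and ia: "iv (iv t \<cdot> s) = iv s \<cdot> t" using st by simp_all
  have x': "x \<in> Xs (iv (iv t \<cdot> s))" using x ia by simp
  have "y \<in> Xs (iv t \<cdot> s)" using th_in[OF a x'] y by simp
  moreover have "th (iv s \<cdot> t) y = x" using th_star_th[OF a x'] y ia by simp
  ultimately show ?thesis using st unfolding transl_def by simp
qed

lemma transl_trans:
  assumes r1: "transl s x t y" and r2: "transl t y u z"
  shows "transl s x u z"
proof -
  have st: "s \<in> A" "t \<in> A" "cd t = cd s" and x: "x \<in> Xs (iv s \<cdot> t)" and y: "th (iv t \<cdot> s) x = y"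
    using r1 unfolding transl_def by auto
  have u: "u \<in> A" "cd u = cd t" and y2: "y \<in> Xs (iv t \<cdot> u)" and z: "th (iv u \<cdot> t) y = z"
    using r2 unfolding transl_def by auto
  have x': "x \<in> Xs (iv (iv t \<cdot> s))" using x st by simp
  have y': "th (iv t \<cdot> s) x \<in> Xs (iv (iv u \<cdot> t))" using y y2 st u by simp
  have "x \<in> Xs (iv ((iv u \<cdot> t) \<cdot> (iv t \<cdot> s))) \<and>
      th ((iv u \<cdot> t) \<cdot> (iv t \<cdot> s)) x = th (iv u \<cdot> t) (th (iv t \<cdot> s) x)"
    by (rule th_mult[OF _ _ _ x' y']) (use st u in simp_all)
  hence c: "x \<in> Xs (iv (iv u \<cdot> t \<cdot> iv t \<cdot> s)) \<and> th (iv u \<cdot> t \<cdot> iv t \<cdot> s) x = z"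
    using st u y z by simp
  have "nat_le S (iv u \<cdot> ((t \<cdot> iv t) \<cdot> s)) (iv u \<cdot> s)"
    by (rule nat_le_mult_left[OF nat_le_idem_mult]) (use st u in simp_all)
  hence "nat_le S (iv u \<cdot> t \<cdot> iv t \<cdot> s) (iv u \<cdot> s)" using st u by simp
  hence "x \<in> Xs (iv (iv u \<cdot> s)) \<and> th (iv u \<cdot> t \<cdot> iv t \<cdot> s) x = th (iv u \<cdot> s) x"
    using th_nat_le c by blast
  thus ?thesis unfolding transl_def using c st u by simp
qed

lemma same_image_transl:
  assumes p: "same_image s x t y" and st: "s \<in> A" "t \<in> A" "cd s = cd t"
  shows "transl s x t y"
proof -
  have x: "x \<in> Xs (iv s)" and y: "y \<in> Xs (iv t)" and e: "th s x = th t y"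
    using p unfolding same_image_def by auto
  have "th s x \<in> Xs (iv (iv t))" using th_in[OF st(2) y] e st by simp
  hence "x \<in> Xs (iv (iv t \<cdot> s)) \<and> th (iv t \<cdot> s) x = th (iv t) (th s x)"
    by (intro th_mult[OF _ _ _ x]) (use st in simp_all)
  moreover have "th (iv t) (th s x) = y" using e th_star_th[OF st(2) y] by simp
  ultimately show ?thesis unfolding transl_def using st by simp
qed

lemma same_image_transl_trans:
  assumes p: "same_image s x t y" and r: "transl t y u z"
  shows "same_image s x u z"
proof -
  have x: "x \<in> Xs (iv s)" and y: "y \<in> Xs (iv t)" and e: "th s x = th t y"
    using p unfolding same_image_def by auto
  have tu: "u \<in> A" "t \<in> A" "cd t = cd u" and z: "z \<in> Xs (iv u \<cdot> t)" and zy: "th (iv t \<cdot> u) z = y"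
    using transl_sym[OF r] unfolding transl_def by auto
  have z': "z \<in> Xs (iv (iv t \<cdot> u))" using z tu by simp
  have "z \<in> Xs (iv (t \<cdot> (iv t \<cdot> u))) \<and> th (t \<cdot> (iv t \<cdot> u)) z = th t (th (iv t \<cdot> u) z)"
    by (rule th_mult[OF _ _ _ z']) (use tu zy y in simp_all)
  hence c: "z \<in> Xs (iv (t \<cdot> iv t \<cdot> u)) \<and> th (t \<cdot> iv t \<cdot> u) z = th t y" using zy tu by simp
  have "nat_le S (t \<cdot> iv t \<cdot> u) u" using nat_le_idem_mult[of "t \<cdot> iv t" u] tu by simp
  hence "z \<in> Xs (iv u) \<and> th (t \<cdot> iv t \<cdot> u) z = th u z" using th_nat_le c by blast
  thus ?thesis unfolding same_image_def using c x e by simp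
qed

lemma related_refl: "(s, x) \<in> D \<Longrightarrow> related s x s x"
  unfolding related_def using transl_refl by blast

lemma same_image_sym: "same_image s x t y \<Longrightarrow> same_image t y s x"
  unfolding same_image_def by auto

lemma related_sym: "related s x t y \<Longrightarrow> related t y s x"
  unfolding related_def using same_image_sym transl_sym by blast

lemma related_trans:
  assumes a: "related s x t y" and b: "related t y u z"
  shows "related s x u z"
proof -
  consider "same_image s x t y" "same_image t y u z" | "same_image s x t y" "transl t y u z"
    | "transl s x t y" "same_image t y u z" | "transl s x t y" "transl t y u z"
    using a b unfolding related_def by blast
  hence "same_image s x u z \<or> transl s x u z"
  proof cases
    case 1
    thus ?thesis unfolding same_image_def by auto
  next
    case 2
    thus ?thesis using same_image_transl_trans by blast
  next
    case 3
    thus ?thesis using same_image_sym same_image_transl_trans transl_sym by blast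
  next
    case 4
    thus ?thesis using transl_trans by blast
  qed
  thus ?thesis using a b unfolding related_def by blast
qed

lemma related_same_cod_transl: "related s x t y \<Longrightarrow> cd s = cd t \<Longrightarrow> transl s x t y"
  unfolding related_def D_iff using same_image_transl by blast

lemma related_same_arrow:
  assumes "related s x s y"
  shows "x = y"
proof -
  have "transl s x s y" using related_same_cod_transl[OF assms] by simp
  hence "s \<in> A" "x \<in> Xs (iv s \<cdot> s)" "th (iv s \<cdot> s) x = y" unfolding transl_def by auto
  thus ?thesis using th_idem[OF idem_star_mult] by auto
qed

lemma sim_iff:
  "((s, x), (t, y)) \<in> glob_sim S Xs th \<longleftrightarrow>
     (s, x) \<in> D \<and> (t, y) \<in> D \<and> (transl s x t y \<or> (idem S s \<and> idem S t \<and> x = y))"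
  unfolding glob_sim_def transl_def comp_def D_iff by auto

lemma sim_related:
  assumes "((s, x), (t, y)) \<in> glob_sim S Xs th"
  shows "related s x t y"
proof -
  have D: "(s, x) \<in> D" "(t, y) \<in> D" using assms sim_iff by auto
  have "same_image s x t y" if "idem S s" "idem S t" "x = y"
    using that D star_idem unfolding same_image_def D_iff by (auto simp: idem_iff th_idem)
  thus ?thesis using assms D sim_iff unfolding related_def by blast
qed

lemma sim_mult_star:
  assumes d: "(s, x) \<in> D" and x: "x \<in> Xs (iv s)"
  shows "((s, x), (s \<cdot> iv s, th s x)) \<in> glob_sim S Xs th"
proof -
  have s: "s \<in> A" using d D_iff by blast
  have "th s x \<in> Xs (s \<cdot> iv s)" using Xs_subset_mult_star[OF s] th_in[OF s x] by blast
  hence "(s \<cdot> iv s, th s x) \<in> D" using s unfolding D_iff by simp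
  moreover have "transl s x (s \<cdot> iv s) (th s x)" unfolding transl_def using s x by simp
  ultimately show ?thesis using d sim_iff by blast
qed

lemma related_approx:
  assumes n: "related s x t y"
  shows "((s, x), (t, y)) \<in> glob_approx S Xs th"
proof -
  let ?r = "glob_sim S Xs th \<union> (glob_sim S Xs th)\<inverse>"
  have D: "(s, x) \<in> D" "(t, y) \<in> D" using n unfolding related_def by auto
  have "((s, x), (t, y)) \<in> ?r\<^sup>*"
  proof (cases "transl s x t y")
    case True
    thus ?thesis using D sim_iff by blast
  next
    case False
    hence x: "x \<in> Xs (iv s)" and y: "y \<in> Xs (iv t)" and e: "th s x = th t y"
      using n unfolding related_def same_image_def by auto
    have s1: "((s, x), (s \<cdot> iv s, th s x)) \<in> glob_sim S Xs th" using sim_mult_star D x by blast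
    have s3: "((t, y), (t \<cdot> iv t, th t y)) \<in> glob_sim S Xs th" using sim_mult_star D y by blast
    have "(s \<cdot> iv s, th s x) \<in> D" "(t \<cdot> iv t, th t y) \<in> D" using s1 s3 sim_iff by auto
    hence s2: "((s \<cdot> iv s, th s x), (t \<cdot> iv t, th t y)) \<in> glob_sim S Xs th"
      using e D sim_iff by (simp add: D_iff)
    have "((s, x), (s \<cdot> iv s, th s x)) \<in> ?r\<^sup>*" using s1 by blast
    also have "((s \<cdot> iv s, th s x), (t \<cdot> iv t, th t y)) \<in> ?r\<^sup>*" using s2 by blast
    also have "((t \<cdot> iv t, th t y), (t, y)) \<in> ?r\<^sup>*" using s3 by blast
    finally show ?thesis .
  qed
  thus ?thesis unfolding glob_approx_def using D by blast
qed

lemma approx_related: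
  assumes a: "((s, x), (t, y)) \<in> glob_approx S Xs th"
  shows "related s x t y"
proof -
  let ?r = "glob_sim S Xs th \<union> (glob_sim S Xs th)\<inverse>"
  have D: "(s, x) \<in> D" and st: "((s, x), (t, y)) \<in> ?r\<^sup>*" using a unfolding glob_approx_def by auto
  from st show ?thesis
  proof (induction "(t, y)" arbitrary: t y rule: rtrancl_induct)
    case base
    thus ?case using related_refl D by simp
  next
    case (step b t y)
    obtain b1 b2 where b: "b = (b1, b2)" by force
    have "related b1 b2 t y" using step(2) b sim_related related_sym by blast
    thus ?case using step(3) b related_trans by blast
  qed
qed

lemma approx_iff_related: "((s, x), (t, y)) \<in> glob_approx S Xs th \<longleftrightarrow> related s x t y"
  using related_approx approx_related by blast

lemma equiv_approx: "equiv D (glob_approx S Xs th)"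
proof (rule equivI)
  show "refl_on D (glob_approx S Xs th)"
    unfolding refl_on_def glob_approx_def by blast
  show "sym (glob_approx S Xs th)"
    unfolding sym_def using approx_iff_related related_sym by auto
  show "trans (glob_approx S Xs th)"
    unfolding trans_def using approx_iff_related related_trans by auto
  show "glob_approx S Xs th \<subseteq> D \<times> D"
    unfolding glob_approx_def by blast
qed

abbreviation cls where "cls s x \<equiv> glob_cls S Xs th s x"
abbreviation E where "E \<equiv> glob_E S Xs th"

lemma cls_eq_iff: "(s, x) \<in> D \<Longrightarrow> (t, y) \<in> D \<Longrightarrow> cls s x = cls t y \<longleftrightarrow> related s x t y"
  unfolding glob_cls_def using eq_equiv_class_iff[OF equiv_approx] approx_iff_related by blast

lemma cls_in_E: "(s, x) \<in> D \<Longrightarrow> cls s x \<in> E"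
  unfolding glob_cls_def glob_E_def by (rule quotientI)

lemma E_cases:
  assumes "C \<in> E"
  obtains s x where "(s, x) \<in> D" "C = cls s x"
  using assms unfolding glob_E_def glob_cls_def by (auto elim!: quotientE)

abbreviation Ds where "Ds \<equiv> glob_Ds S Xs"
abbreviation Es where "Es \<equiv> glob_Es S Xs th"
abbreviation eta where "eta \<equiv> glob_eta S Xs th"

lemma Ds_iff:
  assumes s: "s \<in> A"
  shows "(p, x) \<in> Ds s \<longleftrightarrow> (p, x) \<in> D \<and> cd p = cd s \<and> x \<in> Xs (iv p \<cdot> s \<cdot> iv s \<cdot> p)"
proof -
  have "iv p \<cdot> ((s \<cdot> iv s) \<cdot> p) = iv p \<cdot> s \<cdot> iv s \<cdot> p" if "p \<in> A" "cd p = cd s"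
    using that s by simp
  thus ?thesis unfolding glob_Ds_def comp_def D_iff using s by auto
qed

lemma Ds_star_iff:
  "s \<in> A \<Longrightarrow> (p, x) \<in> Ds (iv s) \<longleftrightarrow> (p, x) \<in> D \<and> cd p = dm s \<and> x \<in> Xs (iv p \<cdot> iv s \<cdot> s \<cdot> p)"
  using Ds_iff[of "iv s" p x] by simp

lemma Ds_D: "(p, x) \<in> Ds s \<Longrightarrow> (p, x) \<in> D"
  unfolding glob_Ds_def by auto

lemma Es_iff: "C \<in> Es s \<longleftrightarrow> (\<exists>p x. (p, x) \<in> Ds s \<and> C = cls p x)"
  unfolding glob_Es_def by auto

lemma EsE:
  assumes "C \<in> Es s"
  obtains p x where "(p, x) \<in> Ds s" "C = cls p x"
  using assms Es_iff by blast

lemma Es_subset_E: "Es s \<subseteq> E"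
  by (auto elim!: EsE intro: cls_in_E Ds_D)

lemma E_eq_Union_Es: "E = (\<Union>s\<in>A. Es s)"
proof
  show "E \<subseteq> (\<Union>s\<in>A. Es s)"
  proof
    fix C assume "C \<in> E"
    then obtain p x where d: "(p, x) \<in> D" "C = cls p x" by (rule E_cases)
    have p: "p \<in> A" using d D_iff by auto
    have "(p, x) \<in> Ds p" unfolding Ds_iff[OF p] using d p by (simp add: D_iff)
    hence "C \<in> Es p" using d(2) Es_iff by blast
    thus "C \<in> (\<Union>s\<in>A. Es s)" using p by blast
  qed
  show "(\<Union>s\<in>A. Es s) \<subseteq> E" using Es_subset_E by blast
qed

lemma transl_conjugate_domain:
  assumes r: "transl q y p x" and e: "idem S e" "dm e = cd q" and y: "y \<in> Xs (iv q \<cdot> e \<cdot> q)"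
  shows "x \<in> Xs (iv p \<cdot> e \<cdot> p)"
proof -
  have qp: "q \<in> A" "p \<in> A" "cd p = cd q" and y1: "y \<in> Xs (iv q \<cdot> p)" and x: "th (iv p \<cdot> q) y = x"
    using r unfolding transl_def by auto
  have eA: "e \<in> A" "cd e = dm e" "e \<cdot> e = e" "iv e = e"
    using e star_idem[OF e(1)] unfolding idem_iff by auto
  have g: "idem S (iv q \<cdot> e \<cdot> q)" using idem_conjugate[OF e(1) qp(1) e(2)] .
  have tg: "th (iv q \<cdot> e \<cdot> q) y = y" using th_idem[OF g y] .
  have y': "y \<in> Xs (iv (iv q \<cdot> e \<cdot> q))" using y star_idem[OF g] by simp
  have "y \<in> Xs (iv ((iv p \<cdot> q) \<cdot> (iv q \<cdot> e \<cdot> q))) \<and>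
      th ((iv p \<cdot> q) \<cdot> (iv q \<cdot> e \<cdot> q)) y = th (iv p \<cdot> q) (th (iv q \<cdot> e \<cdot> q) y)"
    by (rule th_mult[OF _ _ _ y']) (use qp eA e tg y1 in simp_all)
  moreover have "(q \<cdot> iv q) \<cdot> e \<cdot> q = e \<cdot> (q \<cdot> iv q) \<cdot> q"
    by (rule idem_commute_left) (use qp eA e in simp_all)
  hence "(iv p \<cdot> q) \<cdot> (iv q \<cdot> e \<cdot> q) = iv p \<cdot> e \<cdot> q" using qp eA e by simp
  ultimately have c: "y \<in> Xs (iv (iv p \<cdot> e \<cdot> q)) \<and> th (iv p \<cdot> e \<cdot> q) y = x" using tg x by simp
  have a: "iv p \<cdot> e \<cdot> q \<in> A" using qp eA e by simp
  have "x \<in> Xs ((iv p \<cdot> e \<cdot> q) \<cdot> iv (iv p \<cdot> e \<cdot> q))"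
    using Xs_subset_mult_star[OF a] th_in[OF a] c by blast
  moreover have "(q \<cdot> iv q) \<cdot> e \<cdot> p = e \<cdot> (q \<cdot> iv q) \<cdot> p"
    by (rule idem_commute_left) (use qp eA e in simp_all)
  hence "(iv p \<cdot> e \<cdot> q) \<cdot> iv (iv p \<cdot> e \<cdot> q) = iv p \<cdot> e \<cdot> q \<cdot> iv q \<cdot> p"
    using qp eA e idem_mult_left[OF e(1)] by simp
  moreover have "nat_le S (iv p \<cdot> ((e \<cdot> (q \<cdot> iv q)) \<cdot> p)) (iv p \<cdot> (e \<cdot> p))"
    by (intro nat_le_mult_left nat_le_mult_right nat_le_mult_idem) (use qp eA e in simp_all)
  hence "nat_le S (iv p \<cdot> e \<cdot> q \<cdot> iv q \<cdot> p) (iv p \<cdot> e \<cdot> p)" using qp eA e by simp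
  ultimately show ?thesis using Xs_mono by auto
qed

lemma cls_in_Es_iff:
  assumes s: "s \<in> A" and d: "(p, x) \<in> D" and c: "cd p = cd s"
  shows "cls p x \<in> Es s \<longleftrightarrow> x \<in> Xs (iv p \<cdot> s \<cdot> iv s \<cdot> p)"
proof
  assume "cls p x \<in> Es s"
  then obtain q y where q: "(q, y) \<in> Ds s" "cls p x = cls q y" using Es_iff by blast
  have q1: "(q, y) \<in> D" "cd q = cd s" "y \<in> Xs (iv q \<cdot> s \<cdot> iv s \<cdot> q)" using q(1) Ds_iff[OF s] by auto
  have "related q y p x" using q(2) cls_eq_iff d q1 related_sym by simp
  hence r: "transl q y p x" using related_same_cod_transl q1 c by simp
  have "y \<in> Xs (iv q \<cdot> (s \<cdot> iv s) \<cdot> q)" using q1 s d r unfolding transl_def by simp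
  moreover have "dm (s \<cdot> iv s) = cd q" using s q1 by simp
  ultimately have "x \<in> Xs (iv p \<cdot> (s \<cdot> iv s) \<cdot> p)"
    using transl_conjugate_domain[OF r idem_mult_star[OF s]] by blast
  thus "x \<in> Xs (iv p \<cdot> s \<cdot> iv s \<cdot> p)" using s c d r unfolding transl_def by simp
next
  assume "x \<in> Xs (iv p \<cdot> s \<cdot> iv s \<cdot> p)"
  hence "(p, x) \<in> Ds s" using Ds_iff[OF s] d c by simp
  thus "cls p x \<in> Es s" using Es_iff by blast
qed

lemma related_idem_mult:
  assumes e: "idem S e" "dm e = cd p" and d: "(p, x) \<in> D" and x: "x \<in> Xs (iv p \<cdot> e \<cdot> p)"
  shows "related (e \<cdot> p) x p x"
proof -
  have p: "p \<in> A" using d D_iff by auto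
  have eA: "e \<in> A" "cd e = dm e" "e \<cdot> e = e" "iv e = e"
    using e star_idem[OF e(1)] unfolding idem_iff by auto
  have "(e \<cdot> p, x) \<in> D" unfolding D_iff using p eA e x idem_mult_left[OF e(1)] by simp
  moreover have "transl (e \<cdot> p) x p x"
    unfolding transl_def using p eA e x th_idem[OF idem_conjugate[OF e(1) p e(2)] x] by simp
  ultimately show ?thesis using d unfolding related_def by blast
qed

lemma mult_in_Ds:
  assumes s: "s \<in> A" and p: "(p, x) \<in> Ds (iv s)"
  shows "(s \<cdot> p, x) \<in> Ds s"
proof -
  have p1: "(p, x) \<in> D" "cd p = dm s" "x \<in> Xs (iv p \<cdot> iv s \<cdot> s \<cdot> p)" using p Ds_star_iff[OF s] by auto
  have "p \<in> A" using p1 D_iff by auto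
  thus ?thesis unfolding Ds_iff[OF s] D_iff using s p1 by simp
qed

lemma related_mult_left:
  assumes s: "s \<in> A" and p: "(p, x) \<in> Ds (iv s)" and q: "(q, y) \<in> Ds (iv s)" and n: "related p x q y"
  shows "related (s \<cdot> p) x (s \<cdot> q) y"
proof -
  have p1: "(p, x) \<in> D" "cd p = dm s" using p Ds_star_iff[OF s] by auto
  have q1: "(q, y) \<in> D" "cd q = dm s" "y \<in> Xs (iv q \<cdot> iv s \<cdot> s \<cdot> q)" using q Ds_star_iff[OF s] by auto
  have pq: "p \<in> A" "q \<in> A" using p1 q1 D_iff by auto
  have "transl p x q y" using related_same_cod_transl[OF n] p1 q1 by simp
  hence x1: "x \<in> Xs (iv p \<cdot> q)" and xy: "th (iv q \<cdot> p) x = y" unfolding transl_def by auto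
  let ?g = "iv q \<cdot> (iv s \<cdot> s) \<cdot> q"
  have g: "idem S ?g" by (rule idem_conjugate) (use s pq q1 in simp_all)
  have yg: "y \<in> Xs ?g" using q1 s pq by simp
  have tg: "th ?g y = y" using th_idem[OF g yg] .
  have x': "x \<in> Xs (iv (iv q \<cdot> p))" using x1 pq p1 q1 by simp
  have "x \<in> Xs (iv (?g \<cdot> (iv q \<cdot> p))) \<and> th (?g \<cdot> (iv q \<cdot> p)) x = th ?g (th (iv q \<cdot> p) x)"
    by (rule th_mult[OF _ _ _ x']) (use s pq p1 q1 xy yg star_idem[OF g] in simp_all)
  moreover have "(iv s \<cdot> s) \<cdot> (q \<cdot> iv q) \<cdot> p = (q \<cdot> iv q) \<cdot> (iv s \<cdot> s) \<cdot> p"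
    by (rule idem_commute_left) (use s pq p1 q1 in simp_all)
  hence "?g \<cdot> (iv q \<cdot> p) = iv q \<cdot> iv s \<cdot> s \<cdot> p" using s pq p1 q1 by simp
  ultimately have "x \<in> Xs (iv (iv q \<cdot> iv s \<cdot> s \<cdot> p)) \<and> th (iv q \<cdot> iv s \<cdot> s \<cdot> p) x = y"
    using tg xy by simp
  hence "transl (s \<cdot> p) x (s \<cdot> q) y" unfolding transl_def using s pq p1 q1 by simp
  moreover have "(s \<cdot> p, x) \<in> D" "(s \<cdot> q, y) \<in> D"
    using Ds_D[OF mult_in_Ds[OF s p]] Ds_D[OF mult_in_Ds[OF s q]] by auto
  ultimately show ?thesis unfolding related_def by blast
qed

lemma eta_cls:
  assumes s: "s \<in> A" and p: "(p, x) \<in> Ds (iv s)"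
  shows "eta s (cls p x) = cls (s \<cdot> p) x"
proof -
  define z where "z = (SOME (p', x'). (p', x') \<in> Ds (iv s) \<and> cls p x = cls p' x')"
  have "(\<lambda>(p', x'). (p', x') \<in> Ds (iv s) \<and> cls p x = cls p' x') z"
    unfolding z_def by (rule someI[where x="(p, x)"]) (use p in simp)
  then obtain p' x' where z: "z = (p', x')" "(p', x') \<in> Ds (iv s)" "cls p x = cls p' x'"
    by (cases z) auto
  have "eta s (cls p x) = cls (s \<cdot> p') x'"
    unfolding glob_eta_def Let_def z_def[symmetric] using z(1) by simp
  moreover have "related p' x' p x" using z(3) cls_eq_iff Ds_D p z(2) related_sym by metis
  hence "related (s \<cdot> p') x' (s \<cdot> p) x" using related_mult_left[OF s z(2) p] by blast
  hence "cls (s \<cdot> p') x' = cls (s \<cdot> p) x" using cls_eq_iff related_def by blast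
  ultimately show ?thesis by simp
qed

lemma eta_in_Es:
  assumes s: "s \<in> A" and C: "C \<in> Es (iv s)"
  shows "eta s C \<in> Es s"
proof -
  obtain p x where p: "(p, x) \<in> Ds (iv s)" "C = cls p x" using C by (rule EsE)
  hence "eta s C = cls (s \<cdot> p) x" using eta_cls[OF s] by simp
  thus ?thesis using mult_in_Ds[OF s p(1)] unfolding Es_iff by blast
qed

lemma eta_star_eta:
  assumes s: "s \<in> A" and C: "C \<in> Es (iv s)"
  shows "eta (iv s) (eta s C) = C"
proof -
  obtain p x where p: "(p, x) \<in> Ds (iv s)" "C = cls p x" using C by (rule EsE)
  have p1: "(p, x) \<in> D" "cd p = dm s" "x \<in> Xs (iv p \<cdot> iv s \<cdot> s \<cdot> p)" using p Ds_star_iff[OF s] by auto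
  have pA: "p \<in> A" using p1 D_iff by auto
  have "(s \<cdot> p, x) \<in> Ds (iv (iv s))" using mult_in_Ds[OF s p(1)] s by simp
  hence "eta (iv s) (eta s C) = cls (iv s \<cdot> s \<cdot> p) x"
    using eta_cls[OF s p(1)] eta_cls[OF star_arr[OF s]] p(2) s pA p1 by simp
  moreover have "related ((iv s \<cdot> s) \<cdot> p) x p x"
    by (rule related_idem_mult[OF idem_star_mult[OF s] _ p1(1)]) (use s p1 pA in simp_all)
  hence "cls (iv s \<cdot> s \<cdot> p) x = cls p x" using cls_eq_iff s pA p1 unfolding related_def by simp
  ultimately show ?thesis using p(2) by simp
qed

lemma bij_betw_eta:
  assumes s: "s \<in> A"
  shows "bij_betw (eta s) (Es (iv s)) (Es s)"
proof (rule bij_betw_byWitness[where f'="eta (iv s)"])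
  show "\<forall>C\<in>Es (iv s). eta (iv s) (eta s C) = C" using eta_star_eta[OF s] by blast
  show "\<forall>C\<in>Es s. eta s (eta (iv s) C) = C" using eta_star_eta[OF star_arr[OF s]] s by simp
  show "eta s ` Es (iv s) \<subseteq> Es s" using eta_in_Es[OF s] by blast
  show "eta (iv s) ` Es s \<subseteq> Es (iv s)" using eta_in_Es[OF star_arr[OF s]] s by auto
qed

lemma Es_star_mult:
  assumes st: "s \<in> A" "t \<in> A" "dm s = cd t"
  shows "{C \<in> Es (iv t). eta t C \<in> Es (iv s)} = Es (iv (s \<cdot> t))"
proof
  have stA: "s \<cdot> t \<in> A" using st by simp
  show "{C \<in> Es (iv t). eta t C \<in> Es (iv s)} \<subseteq> Es (iv (s \<cdot> t))"
  proof
    fix C assume C: "C \<in> {C \<in> Es (iv t). eta t C \<in> Es (iv s)}"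
    obtain p x where p: "(p, x) \<in> Ds (iv t)" "C = cls p x" using C by (auto elim: EsE)
    have p1: "(p, x) \<in> D" "cd p = dm t" using p Ds_star_iff[OF st(2)] by auto
    have pA: "p \<in> A" using p1 D_iff by auto
    have "cls (t \<cdot> p) x \<in> Es (iv s)" using C eta_cls[OF st(2) p(1)] p(2) by simp
    hence "x \<in> Xs (iv (t \<cdot> p) \<cdot> iv s \<cdot> iv (iv s) \<cdot> (t \<cdot> p))"
      using cls_in_Es_iff[OF star_arr[OF st(1)] Ds_D[OF mult_in_Ds[OF st(2) p(1)]]] st pA p1 by simp
    hence "(p, x) \<in> Ds (iv (s \<cdot> t))" unfolding Ds_star_iff[OF stA] using p1 st pA by simp
    thus "C \<in> Es (iv (s \<cdot> t))" using p(2) Es_iff by blast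
  qed
  show "Es (iv (s \<cdot> t)) \<subseteq> {C \<in> Es (iv t). eta t C \<in> Es (iv s)}"
  proof
    fix C assume C: "C \<in> Es (iv (s \<cdot> t))"
    obtain p x where p: "(p, x) \<in> Ds (iv (s \<cdot> t))" "C = cls p x" using C by (rule EsE)
    have p1: "(p, x) \<in> D" "cd p = dm (s \<cdot> t)" "x \<in> Xs (iv p \<cdot> iv (s \<cdot> t) \<cdot> (s \<cdot> t) \<cdot> p)"
      using p Ds_star_iff[OF stA] by auto
    have pA: "p \<in> A" and cp: "cd p = dm t" using p1 st D_iff by auto
    have x1: "x \<in> Xs (iv (t \<cdot> p) \<cdot> (iv s \<cdot> s) \<cdot> (t \<cdot> p))" using p1 st pA cp by simp
    have "nat_le S (iv (t \<cdot> p) \<cdot> (iv s \<cdot> s) \<cdot> (t \<cdot> p)) (iv (t \<cdot> p) \<cdot> (t \<cdot> p))"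
      by (rule nat_le_conjugate_idem) (use st pA cp in simp_all)
    hence x2: "x \<in> Xs (iv (t \<cdot> p) \<cdot> (t \<cdot> p))" using Xs_mono x1 by blast
    hence pt: "(p, x) \<in> Ds (iv t)" unfolding Ds_star_iff[OF st(2)] using p1 st pA cp by simp
    have "(t \<cdot> p, x) \<in> Ds (iv s)" unfolding Ds_star_iff[OF st(1)] D_iff using x1 x2 st pA cp by simp
    hence "eta t C \<in> Es (iv s)" using eta_cls[OF st(2) pt] p(2) Es_iff by auto
    thus "C \<in> {C \<in> Es (iv t). eta t C \<in> Es (iv s)}" using pt p(2) Es_iff by blast
  qed
qed

lemma eta_mult:
  assumes st: "s \<in> A" "t \<in> A" "dm s = cd t" and C: "C \<in> Es (iv (s \<cdot> t))"
  shows "eta (s \<cdot> t) C = eta s (eta t C)"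
proof -
  have stA: "s \<cdot> t \<in> A" using st by simp
  obtain p x where p: "(p, x) \<in> Ds (iv (s \<cdot> t))" "C = cls p x" using C by (rule EsE)
  have Ct: "C \<in> Es (iv t)" and Cs: "eta t C \<in> Es (iv s)" using Es_star_mult[OF st] C by auto
  have p1: "(p, x) \<in> D" "cd p = dm (s \<cdot> t)" using p Ds_star_iff[OF stA] by auto
  have pA: "p \<in> A" and cp: "cd p = dm t" using p1 st D_iff by auto
  have "x \<in> Xs (iv p \<cdot> iv t \<cdot> iv (iv t) \<cdot> p)"
    using Ct p cls_in_Es_iff[OF star_arr[OF st(2)] p1(1)] st cp by simp
  hence pt: "(p, x) \<in> Ds (iv t)" unfolding Ds_star_iff[OF st(2)] using p1 cp st by simp
  have e1: "eta t C = cls (t \<cdot> p) x" using eta_cls[OF st(2) pt] p(2) by simp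
  have d2: "(t \<cdot> p, x) \<in> D" using Ds_D[OF mult_in_Ds[OF st(2) pt]] .
  have "x \<in> Xs (iv (t \<cdot> p) \<cdot> iv s \<cdot> iv (iv s) \<cdot> (t \<cdot> p))"
    using Cs e1 cls_in_Es_iff[OF star_arr[OF st(1)] d2] st pA cp by simp
  hence "(t \<cdot> p, x) \<in> Ds (iv s)" unfolding Ds_star_iff[OF st(1)] using d2 st pA cp by simp
  hence "eta s (eta t C) = cls (s \<cdot> t \<cdot> p) x" using eta_cls[OF st(1)] e1 by simp
  moreover have "eta (s \<cdot> t) C = cls ((s \<cdot> t) \<cdot> p) x" using eta_cls[OF stA p(1)] p(2) by simp
  ultimately show ?thesis using st pA cp by simp
qed

lemma Es_mono:
  assumes n: "nat_le S s t"
  shows "Es s \<subseteq> Es t"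
proof
  fix C assume C: "C \<in> Es s"
  obtain e where e: "idem S e" "e \<in> A" "dm t = cd e" "dm e = cd e" "e \<cdot> e = e" "s = t \<cdot> e"
    "s \<in> A" "t \<in> A" "dm s = dm t" "cd s = cd t" using nat_leE[OF n] by blast
  obtain p x where p: "(p, x) \<in> Ds s" "C = cls p x" using C by (rule EsE)
  have p1: "(p, x) \<in> D" "cd p = cd s" "x \<in> Xs (iv p \<cdot> s \<cdot> iv s \<cdot> p)" using p Ds_iff[OF e(7)] by auto
  have pA: "p \<in> A" using p1 D_iff by auto
  have "nat_le S ((t \<cdot> iv t) \<cdot> (s \<cdot> iv s)) (t \<cdot> iv t)"
    by (rule nat_le_mult_idem) (use e idem_mult_star[OF e(7)] in simp_all)
  hence "nat_le S (s \<cdot> iv s) (t \<cdot> iv t)" using e by simp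
  hence "nat_le S (iv p \<cdot> ((s \<cdot> iv s) \<cdot> p)) (iv p \<cdot> ((t \<cdot> iv t) \<cdot> p))"
    by (intro nat_le_mult_left nat_le_mult_right) (use e pA p1 in simp_all)
  hence "nat_le S (iv p \<cdot> s \<cdot> iv s \<cdot> p) (iv p \<cdot> t \<cdot> iv t \<cdot> p)" using e pA p1 by simp
  hence "x \<in> Xs (iv p \<cdot> t \<cdot> iv t \<cdot> p)" using Xs_mono p1 by blast
  hence "(p, x) \<in> Ds t" unfolding Ds_iff[OF e(8)] using p1 e by simp
  thus "C \<in> Es t" using p(2) Es_iff by blast
qed

lemma global_action_eta: "global_action S E Es eta"
proof -
  have "partial_action S E Es eta"
    unfolding partial_action_def
  proof (intro conjI ballI allI impI)
    show "E = (\<Union>s\<in>A. Es s)" by (rule E_eq_Union_Es)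
    fix s t C
    show "Es s \<subseteq> E" by (rule Es_subset_E)
    show "s \<in> A \<Longrightarrow> bij_betw (eta s) (Es (iv s)) (Es s)" by (rule bij_betw_eta)
    show "s \<in> A \<Longrightarrow> C \<in> Es (iv s) \<Longrightarrow> eta (iv s) (eta s C) = C" by (rule eta_star_eta)
    show "s \<in> A \<Longrightarrow> C \<in> Es s \<Longrightarrow> eta s (eta (iv s) C) = C"
      using eta_star_eta[of "iv s"] by simp
    show "nat_le S s t \<Longrightarrow> Es s \<subseteq> Es t" by (rule Es_mono)
    assume "comp S s t \<and> C \<in> Es (iv t) \<and> eta t C \<in> Es (iv s)"
    hence st: "s \<in> A" "t \<in> A" "dm s = cd t" and "C \<in> Es (iv (s \<cdot> t))"
      using Es_star_mult unfolding comp_def by auto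
    thus "C \<in> Es (iv (s \<cdot> t))" and "eta (s \<cdot> t) C = eta s (eta t C)"
      using eta_mult by auto
  qed
  thus ?thesis unfolding global_action_def comp_def using Es_star_mult eta_mult by blast
qed

end

section \<open>The order on the globalization\<close>

locale ord_part_action = part_action S X Xs th
  for S :: "('a, 'o, 'z) semigroupoid_scheme" and X :: "'x set"
    and Xs :: "'a \<Rightarrow> 'x set" and th :: "'a \<Rightarrow> 'x \<Rightarrow> 'x" +
  fixes le :: "'x \<Rightarrow> 'x \<Rightarrow> bool"
  assumes poset: "poset X le" and ordered: "ordered_action S X le Xs th"
begin

lemma le_refl: "x \<in> X \<Longrightarrow> le x x"
  and le_antisym: "x \<in> X \<Longrightarrow> y \<in> X \<Longrightarrow> le x y \<Longrightarrow> le y x \<Longrightarrow> x = y"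
  and le_trans: "x \<in> X \<Longrightarrow> y \<in> X \<Longrightarrow> z \<in> X \<Longrightarrow> le x y \<Longrightarrow> le y z \<Longrightarrow> le x z"
  using poset unfolding poset_def by blast+

lemma Xs_down_closed: "s \<in> A \<Longrightarrow> x \<in> Xs s \<Longrightarrow> y \<in> X \<Longrightarrow> le y x \<Longrightarrow> y \<in> Xs s"
  using ordered unfolding ordered_action_def order_ideal_def by blast

lemma th_le_iff: "s \<in> A \<Longrightarrow> x \<in> Xs (iv s) \<Longrightarrow> y \<in> Xs (iv s) \<Longrightarrow> le (th s x) (th s y) \<longleftrightarrow> le x y"
  using ordered unfolding ordered_action_def order_iso_def by blast

lemma transl_below:
  assumes r: "transl r y q z" and D: "(r, y) \<in> D" "(q, z) \<in> D" and x: "x \<in> X" "le x y"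
  shows "\<exists>x'. related q x' r x \<and> le x' z"
proof -
  have rq: "r \<in> A" "q \<in> A" "cd q = cd r" and y: "y \<in> Xs (iv r \<cdot> q)" and z: "th (iv q \<cdot> r) y = z"
    using r unfolding transl_def by auto
  have a: "iv q \<cdot> r \<in> A" and ia: "iv (iv q \<cdot> r) = iv r \<cdot> q" using rq by simp_all
  have xq: "x \<in> Xs (iv r \<cdot> q)" using Xs_down_closed[OF _ y x] rq by simp
  define x' where "x' = th (iv q \<cdot> r) x"
  have l: "le x' z" using th_le_iff[OF a, of x y] ia xq y x z x'_def by simp
  have "x' \<in> X" using th_in[OF a] ia xq Xs_subset[OF a] x'_def by auto
  hence "(q, x') \<in> D" using Xs_down_closed[OF _ _ _ l] D rq by (simp add: D_iff)
  moreover have "(r, x) \<in> D" using Xs_down_closed[OF _ _ x] D rq by (simp add: D_iff)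
  moreover have "transl r x q x'" unfolding transl_def using rq xq x'_def by simp
  ultimately have "related q x' r x" using transl_sym unfolding related_def by blast
  thus ?thesis using l by blast
qed

lemma same_image_below:
  assumes p: "same_image r y q z" and D: "(r, y) \<in> D" "(q, z) \<in> D" and x: "x \<in> X" "le x y"
  shows "\<exists>x'. related q x' r x \<and> le x' z"
proof -
  have rq: "r \<in> A" "q \<in> A" using D D_iff by auto
  have y: "y \<in> Xs (iv r)" and z: "z \<in> Xs (iv q)" and e: "th r y = th q z"
    using p unfolding same_image_def by auto
  have xr: "x \<in> Xs (iv r)" using Xs_down_closed[OF _ y x] rq by simp
  define w where "w = th r x"
  have lw: "le w (th q z)" using th_le_iff[OF rq(1) xr y] x e w_def by simp
  have w: "w \<in> X" using th_in[OF rq(1) xr] Xs_subset[OF rq(1)] w_def by blast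
  have tq: "th q z \<in> Xs q" using th_in[OF rq(2) z] .
  have wq: "w \<in> Xs q" using Xs_down_closed[OF rq(2) tq w lw] .
  define x' where "x' = th (iv q) w"
  have x'q: "x' \<in> Xs (iv q)" using th_in[OF star_arr[OF rq(2)], of w] wq rq x'_def by simp
  have "le x' z"
    using th_le_iff[OF star_arr[OF rq(2)], of w "th q z"] wq tq rq lw x'_def th_star_th[OF rq(2) z]
    by simp
  moreover have "same_image q x' r x"
    unfolding same_image_def using x'q xr w_def th_th_star[OF rq(2) wq] x'_def by simp
  moreover have "(q, x') \<in> D" using Xs_star_subset[OF rq(2)] x'q rq by (auto simp: D_iff)
  moreover have "(r, x) \<in> D" using Xs_star_subset[OF rq(1)] xr rq by (auto simp: D_iff)
  ultimately show ?thesis unfolding related_def by blast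
qed

lemma related_below:
  assumes n: "related r y q z" and x: "x \<in> X" "le x y"
  shows "\<exists>x'. related q x' r x \<and> le x' z"
  using n transl_below[OF _ _ _ x] same_image_below[OF _ _ _ x] unfolding related_def by blast

abbreviation rep where "rep \<equiv> glob_le_rep S X le Xs th"
abbreviation leE where "leE \<equiv> glob_le S X le Xs th"

lemma glob_le_rep_cong:
  "related s x s' x' \<Longrightarrow> related t y t' y' \<Longrightarrow> rep s x t y \<longleftrightarrow> rep s' x' t' y'"
  unfolding glob_le_rep_def approx_iff_related using related_trans related_sym by meson

lemma glob_le_rep_iff:
  assumes "(s, x) \<in> D" "(t, y) \<in> D"
  shows "rep s x t y \<longleftrightarrow> (\<exists>x'. related t x' s x \<and> le x' y)"
proof
  assume "rep s x t y"
  then obtain r y' x' where r: "x' \<in> X" "related r y' t y" "le x' y'" "related r x' s x"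
    unfolding glob_le_rep_def approx_iff_related by blast
  obtain x'' where "related t x'' r x'" "le x'' y" using related_below[OF r(2) r(1) r(3)] by blast
  thus "\<exists>x'. related t x' s x \<and> le x' y" using r(4) related_trans by blast
next
  assume "\<exists>x'. related t x' s x \<and> le x' y"
  then obtain x' where x': "related t x' s x" "le x' y" by blast
  have "x' \<in> X" using x'(1) D_in_X unfolding related_def by blast
  thus "rep s x t y" unfolding glob_le_rep_def approx_iff_related using assms x' related_refl by blast
qed

lemma glob_le_cls_iff:
  assumes d: "(s, x) \<in> D" "(t, y) \<in> D"
  shows "leE (cls s x) (cls t y) \<longleftrightarrow> (\<exists>x'. related t x' s x \<and> le x' y)"
proof -
  have "leE (cls s x) (cls t y) \<longleftrightarrow> rep s x t y"
  proof
    assume "leE (cls s x) (cls t y)"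
    then obtain s' x' t' y' where o: "(s', x') \<in> D" "(t', y') \<in> D" "cls s x = cls s' x'"
      "cls t y = cls t' y'" "rep s' x' t' y'" unfolding glob_le_def by blast
    have "related s x s' x'" "related t y t' y'" using o d cls_eq_iff by auto
    thus "rep s x t y" using glob_le_rep_cong o(5) by blast
  next
    assume "rep s x t y"
    thus "leE (cls s x) (cls t y)" unfolding glob_le_def using d by blast
  qed
  thus ?thesis using glob_le_rep_iff[OF d] by simp
qed

lemma glob_le_refl:
  assumes "C \<in> E"
  shows "leE C C"
proof -
  obtain s x where d: "(s, x) \<in> D" "C = cls s x" using assms by (rule E_cases)
  thus ?thesis using glob_le_cls_iff[OF d(1) d(1)] related_refl D_in_X le_refl by blast
qed

lemma glob_le_trans:
  assumes C: "C1 \<in> E" "C2 \<in> E" "C3 \<in> E" and l: "leE C1 C2" "leE C2 C3"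
  shows "leE C1 C3"
proof -
  obtain s x where d1: "(s, x) \<in> D" "C1 = cls s x" using C(1) by (rule E_cases)
  obtain t y where d2: "(t, y) \<in> D" "C2 = cls t y" using C(2) by (rule E_cases)
  obtain u z where d3: "(u, z) \<in> D" "C3 = cls u z" using C(3) by (rule E_cases)
  obtain x2 where a: "related t x2 s x" "le x2 y" using l glob_le_cls_iff d1 d2 by blast
  obtain y2 where b: "related u y2 t y" "le y2 z" using l glob_le_cls_iff d2 d3 by blast
  have "x2 \<in> X" using a D_in_X unfolding related_def by blast
  then obtain x3 where x3: "related u x3 t x2" "le x3 y2"
    using related_below[OF related_sym[OF b(1)] _ a(2)] by blast
  have "le x3 z" using le_trans x3(2) b(2) D_in_X x3(1) b(1) d3(1) unfolding related_def by blast
  moreover have "related u x3 s x" using related_trans x3(1) a(1) by blast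
  ultimately show ?thesis using glob_le_cls_iff d1 d3 by blast
qed

lemma glob_le_antisym:
  assumes C: "C1 \<in> E" "C2 \<in> E" and l: "leE C1 C2" "leE C2 C1"
  shows "C1 = C2"
proof -
  obtain s x where d1: "(s, x) \<in> D" "C1 = cls s x" using C(1) by (rule E_cases)
  obtain t y where d2: "(t, y) \<in> D" "C2 = cls t y" using C(2) by (rule E_cases)
  obtain x2 where a: "related t x2 s x" "le x2 y" using l glob_le_cls_iff d1 d2 by blast
  obtain y2 where b: "related s y2 t y" "le y2 x" using l glob_le_cls_iff d1 d2 by blast
  have "x2 \<in> X" using a D_in_X unfolding related_def by blast
  then obtain x3 where x3: "related s x3 t x2" "le x3 y2"
    using related_below[OF related_sym[OF b(1)] _ a(2)] by blast
  have "x3 = x" using related_same_arrow[OF related_trans[OF x3(1) a(1)]] .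
  hence "x = y2" using le_antisym b(2) x3(2) D_in_X d1 b(1) unfolding related_def by blast
  thus ?thesis using b(1) cls_eq_iff d1 d2 by simp
qed

lemma poset_glob_le: "poset E leE"
  unfolding poset_def using glob_le_refl glob_le_antisym glob_le_trans by blast

lemma order_ideal_Es:
  assumes s: "s \<in> A"
  shows "order_ideal E leE (Es s)"
  unfolding order_ideal_def
proof (intro conjI ballI impI)
  show "Es s \<subseteq> E" by (rule Es_subset_E)
next
  fix C C' assume C: "C \<in> Es s" and C': "C' \<in> E" and l: "leE C' C"
  obtain p x where p: "(p, x) \<in> Ds s" "C = cls p x" using C by (rule EsE)
  obtain q z where q: "(q, z) \<in> D" "C' = cls q z" using C' by (rule E_cases)
  have p1: "(p, x) \<in> D" "cd p = cd s" "x \<in> Xs (iv p \<cdot> s \<cdot> iv s \<cdot> p)" using p Ds_iff[OF s] by auto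
  have pA: "p \<in> A" using p1 D_iff by auto
  obtain x' where x': "related p x' q z" "le x' x" using glob_le_cls_iff[OF q(1) p1(1)] l p q by auto
  have d': "(p, x') \<in> D" using x' related_def by blast
  have "x' \<in> Xs (iv p \<cdot> s \<cdot> iv s \<cdot> p)"
    by (rule Xs_down_closed[OF _ p1(3) D_in_X[OF d'] x'(2)]) (use s pA p1 in simp)
  hence "(p, x') \<in> Ds s" unfolding Ds_iff[OF s] using d' p1 by simp
  moreover have "C' = cls p x'" using cls_eq_iff d' q x' related_sym by metis
  ultimately show "C' \<in> Es s" using Es_iff by blast
qed

lemma eta_mono:
  assumes s: "s \<in> A" and C: "C1 \<in> Es (iv s)" "C2 \<in> Es (iv s)" and l: "leE C1 C2"
  shows "leE (eta s C1) (eta s C2)"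
proof -
  obtain p x where p: "(p, x) \<in> Ds (iv s)" "C1 = cls p x" using C(1) by (rule EsE)
  obtain q y where q: "(q, y) \<in> Ds (iv s)" "C2 = cls q y" using C(2) by (rule EsE)
  have p1: "(p, x) \<in> D" using p Ds_D by blast
  have q1: "(q, y) \<in> D" "cd q = dm s" "y \<in> Xs (iv q \<cdot> iv s \<cdot> s \<cdot> q)" using q Ds_star_iff[OF s] by auto
  have qA: "q \<in> A" using q1 D_iff by auto
  obtain x' where x': "related q x' p x" "le x' y" using glob_le_cls_iff[OF p1 q1(1)] l p q by auto
  have d': "(q, x') \<in> D" using x' related_def by blast
  have "x' \<in> Xs (iv q \<cdot> iv s \<cdot> s \<cdot> q)"
    by (rule Xs_down_closed[OF _ q1(3) D_in_X[OF d'] x'(2)]) (use s qA q1 in simp)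
  hence dq: "(q, x') \<in> Ds (iv s)" unfolding Ds_star_iff[OF s] using d' q1 by simp
  have "C1 = cls q x'" using cls_eq_iff d' p1 p x' related_sym by metis
  hence e1: "eta s C1 = cls (s \<cdot> q) x'" using eta_cls[OF s dq] by simp
  have e2: "eta s C2 = cls (s \<cdot> q) y" using eta_cls[OF s q(1)] q(2) by simp
  have a: "(s \<cdot> q, x') \<in> D" "(s \<cdot> q, y) \<in> D"
    using Ds_D[OF mult_in_Ds[OF s dq]] Ds_D[OF mult_in_Ds[OF s q(1)]] by auto
  have "leE (cls (s \<cdot> q) x') (cls (s \<cdot> q) y)" using glob_le_cls_iff[OF a] related_refl[OF a(1)] x'(2) by blast
  thus ?thesis using e1 e2 by simp
qed

lemma order_iso_eta:
  assumes s: "s \<in> A"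
  shows "order_iso leE (eta s) (Es (iv s)) (Es s)"
  unfolding order_iso_def
proof (intro conjI ballI iffI)
  show "bij_betw (eta s) (Es (iv s)) (Es s)" by (rule bij_betw_eta[OF s])
  fix C1 C2 assume C: "C1 \<in> Es (iv s)" "C2 \<in> Es (iv s)"
  show "leE C1 C2 \<Longrightarrow> leE (eta s C1) (eta s C2)" using eta_mono[OF s C] .
  assume l: "leE (eta s C1) (eta s C2)"
  have "eta s C1 \<in> Es (iv (iv s))" "eta s C2 \<in> Es (iv (iv s))" using eta_in_Es[OF s] C s by auto
  hence "leE (eta (iv s) (eta s C1)) (eta (iv s) (eta s C2))" using eta_mono[OF star_arr[OF s] _ _ l] by blast
  thus "leE C1 C2" using eta_star_eta[OF s] C by simp
qed

lemma ordered_global_action_eta: "ordered_global_action S E leE Es eta"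
  unfolding ordered_global_action_def ordered_action_def
  using poset_glob_le global_action_eta order_ideal_Es order_iso_eta by blast

end

theorem mainTheorem5:
  fixes S :: "('a, 'o) semigroupoid"
    and X :: "'x set" and le :: "'x \<Rightarrow> 'x \<Rightarrow> bool"
    and Xs :: "'a \<Rightarrow> 'x set" and \<theta> :: "'a \<Rightarrow> 'x \<Rightarrow> 'x"
  assumes "inverse_semigroupoid S"
    and "ordered_partial_action S X le Xs \<theta>"
  shows "(\<forall>s x s2 x2 t y t2 y2.
            ((s, x), (s2, x2)) \<in> glob_approx S Xs \<theta> \<and> ((t, y), (t2, y2)) \<in> glob_approx S Xs \<theta> \<longrightarrow>
            (glob_le_rep S X le Xs \<theta> s x t y \<longleftrightarrow> glob_le_rep S X le Xs \<theta> s2 x2 t2 y2))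
       \<and> poset (glob_E S Xs \<theta>) (glob_le S X le Xs \<theta>)
       \<and> (\<forall>s\<in>arr S. order_ideal (glob_E S Xs \<theta>) (glob_le S X le Xs \<theta>) (glob_Es S Xs \<theta> s))
       \<and> (\<forall>s\<in>arr S. \<forall>C1\<in>glob_Es S Xs \<theta> (star S s). \<forall>C2\<in>glob_Es S Xs \<theta> (star S s).
            glob_le S X le Xs \<theta> C1 C2 \<longrightarrow> glob_le S X le Xs \<theta> (glob_eta S Xs \<theta> s C1) (glob_eta S Xs \<theta> s C2))
       \<and> ordered_global_action S (glob_E S Xs \<theta>) (glob_le S X le Xs \<theta>) (glob_Es S Xs \<theta>) (glob_eta S Xs \<theta>)"
proof -
  interpret ord_part_action S X Xs \<theta> le
    using assms unfolding ordered_partial_action_def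
    by unfold_locales auto
  have "glob_le_rep S X le Xs \<theta> s x t y \<longleftrightarrow> glob_le_rep S X le Xs \<theta> s2 x2 t2 y2"
    if "((s, x), (s2, x2)) \<in> glob_approx S Xs \<theta>" "((t, y), (t2, y2)) \<in> glob_approx S Xs \<theta>"
    for s x s2 x2 t y t2 y2
    using that glob_le_rep_cong unfolding approx_iff_related by blast
  thus ?thesis
    using poset_glob_le order_ideal_Es eta_mono ordered_global_action_eta by blast
qed

end
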